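(* Let $H$ be a complex Hilbert space and $\{\mathcal{U}(t)\}_{t\geq 0}$ a strongly continuous semigroup on $H$ with generator $\mathcal{L}$. Let $z\in D(\mathcal{L}^\dagger)$ with $z\neq 0$, let $\mathcal{P}:=(\cdot,z)(z,z)^{-1}z$ and $\mathcal{Q}:=1-\mathcal{P}$. Let $\{e^{\overline{\mathcal{QL}}t}\}_{t\geq 0}$ denote the strongly continuous semigroup generated by $\overline{\mathcal{QL}}$. Then $\{\mathcal{G}(t):=\mathcal{P}+e^{\overline{\mathcal{QL}}t}\mathcal{Q}\}_{t\geq0}$ is a strongly continuous semigroup with generator $\overline{\mathcal{QL}}\mathcal{Q}$.
   Context: The scalar product $(\cdot,\cdot)$ on $H$ is conjugate-linear in its second argument. The generator is $\mathcal{L}x:=\lim_{h\searrow 0}\frac1h[\mathcal{U}(h)x-x]$ on the set $D(\mathcal{L})$ where the limit exists. $\dagger$ denotes the adjoint, the overbar the closure; $D(\overline{\mathcal{QL}}\mathcal{Q})=\{x\in H:\mathcal{Q}x\in D(\overline{\mathcal{QL}})\}$. The notation $\{e^{\mathcal{A}t}\}_{t\ge0}$ means the strongly continuous semigroup generated by $\mathcal{A}$. *)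

theory Defs
  imports "HOL-Analysis.Analysis"
begin

definition complex_hilbert_space :: "(complex \<Rightarrow> 'a::banach \<Rightarrow> 'a) \<Rightarrow> ('a \<Rightarrow> 'a \<Rightarrow> complex) \<Rightarrow> bool" where
  "complex_hilbert_space sm ip \<longleftrightarrow>
     (\<forall>r x. sm (complex_of_real r) x = scaleR r x) \<and>
     (\<forall>a b x. sm (a * b) x = sm a (sm b x)) \<and>
     (\<forall>a b x. sm (a + b) x = sm a x + sm b x) \<and>
     (\<forall>a x y. sm a (x + y) = sm a x + sm a y) \<and>
     (\<forall>x y z. ip (x + y) z = ip x z + ip y z) \<and>
     (\<forall>a x y. ip (sm a x) y = a * ip x y) \<and>
     (\<forall>x y. ip y x = cnj (ip x y)) \<and>
     (\<forall>x. ip x x = complex_of_real ((norm x)\<^sup>2))"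

definition bounded_clinear_op :: "(complex \<Rightarrow> 'a::real_normed_vector \<Rightarrow> 'a) \<Rightarrow> ('a \<Rightarrow> 'a) \<Rightarrow> bool" where
  "bounded_clinear_op sm T \<longleftrightarrow>
     (\<forall>x y. T (x + y) = T x + T y) \<and> (\<forall>a x. T (sm a x) = sm a (T x)) \<and>
     (\<exists>K. \<forall>x. norm (T x) \<le> norm x * K)"

text \<open>Strongly continuous (C0) semigroup of bounded complex-linear operators,
indexed by t \<ge> 0 (values at negative t are irrelevant).\<close>

definition C0_semigroup :: "(complex \<Rightarrow> 'a::real_normed_vector \<Rightarrow> 'a) \<Rightarrow> (real \<Rightarrow> 'a \<Rightarrow> 'a) \<Rightarrow> bool" where
  "C0_semigroup sm U \<longleftrightarrow>
     (\<forall>t\<ge>0. bounded_clinear_op sm (U t)) \<and>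
     U 0 = id \<and>
     (\<forall>s t. 0 \<le> s \<longrightarrow> 0 \<le> t \<longrightarrow> U (s + t) = U s \<circ> U t) \<and>
     (\<forall>x. ((\<lambda>t. U t x) \<longlongrightarrow> x) (at_right 0))"

text \<open>(Possibly unbounded) operators are represented by their graphs.
The generator: Lx = lim_{h \<searrow> 0} (U(h)x - x)/h, on the set where the limit exists.\<close>

definition generator_graph :: "(real \<Rightarrow> 'a::real_normed_vector \<Rightarrow> 'a) \<Rightarrow> ('a \<times> 'a) set" where
  "generator_graph U = {(x, y). ((\<lambda>h. scaleR (1 / h) (U h x - x)) \<longlongrightarrow> y) (at_right 0)}"

definition adjoint_dom :: "('a \<Rightarrow> 'a \<Rightarrow> complex) \<Rightarrow> ('a \<times> 'a) set \<Rightarrow> 'a set" where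
  "adjoint_dom ip G = {z. \<exists>w. \<forall>(x, y) \<in> G. ip y z = ip x w}"

definition projP :: "(complex \<Rightarrow> 'a \<Rightarrow> 'a) \<Rightarrow> ('a \<Rightarrow> 'a \<Rightarrow> complex) \<Rightarrow> 'a \<Rightarrow> 'a \<Rightarrow> 'a" where
  "projP sm ip z x = sm (ip x z / ip z z) z"

definition projQ :: "(complex \<Rightarrow> 'a \<Rightarrow> 'a::ab_group_add) \<Rightarrow> ('a \<Rightarrow> 'a \<Rightarrow> complex) \<Rightarrow> 'a \<Rightarrow> 'a \<Rightarrow> 'a" where
  "projQ sm ip z x = x - projP sm ip z x"

definition QL_graph :: "(complex \<Rightarrow> 'a \<Rightarrow> 'a::ab_group_add) \<Rightarrow> ('a \<Rightarrow> 'a \<Rightarrow> complex) \<Rightarrow> 'a \<Rightarrow> ('a \<times> 'a) set \<Rightarrow> ('a \<times> 'a) set" where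
  "QL_graph sm ip z G = {(x, projQ sm ip z y) | x y. (x, y) \<in> G}"

end

theory Submission
  imports Defs
begin

text \<open>The generator of S is the closure of QL, whose values lie in the closed hyperplane
orthogonal to z. Every increment S(t)x - x is the generator applied to the integral of
S(s)x over [0, t], so it is orthogonal to z as well; hence P S(t) Q = 0. This makes
G(t) = P + S(t)Q a semigroup, and G(h)x - x = S(h)Qx - Qx identifies its generator.
The continuity of s \<mapsto> S(s)x needed for the integral comes from a Baire category bound
on S(t) for small t.\<close>

lemma tendsto_right_quotient_if_has_vector_derivative:
  fixes F :: "real \<Rightarrow> 'a::real_normed_vector"
  assumes "(F has_vector_derivative D) (at_right a)"
  shows "((\<lambda>r. (1 / r) *\<^sub>R (F (a + r) - F a)) \<longlongrightarrow> D) (at_right 0)"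
proof -
  have "((\<lambda>y. (F y - F a - (y - a) *\<^sub>R D) /\<^sub>R norm (y - a)) \<longlongrightarrow> 0) (at_right a)"
    using assms unfolding has_vector_derivative_def has_derivative_at_within by blast
  then have "((\<lambda>r. (F (r + a) - F a - r *\<^sub>R D) /\<^sub>R norm r) \<longlongrightarrow> 0) (at_right 0)"
    unfolding at_right_to_0[of a] filterlim_filtermap by simp
  moreover have "\<forall>\<^sub>F r in at_right 0.
      (F (r + a) - F a - r *\<^sub>R D) /\<^sub>R norm r = (1 / r) *\<^sub>R (F (a + r) - F a) - D"
    using eventually_at_right_less[of "0::real"]
    by eventually_elim (simp add: add.commute scaleR_diff_right inverse_eq_divide)
  ultimately have "((\<lambda>r. (1 / r) *\<^sub>R (F (a + r) - F a) - D) \<longlongrightarrow> 0) (at_right 0)"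
    using tendsto_cong by fastforce
  then show ?thesis
    by (simp add: Lim_null[symmetric])
qed

lemma tendsto_integral_average_at_right:
  fixes f :: "real \<Rightarrow> 'a::banach"
  assumes "continuous_on {a..b} f" and "a < b"
  shows "((\<lambda>r. (1 / r) *\<^sub>R integral {a..a + r} f) \<longlongrightarrow> f a) (at_right 0)"
proof -
  have "((\<lambda>u. integral {a..u} f) has_vector_derivative f a) (at a within {a..b})"
    using assms by (intro integral_has_vector_derivative) auto
  then have "((\<lambda>u. integral {a..u} f) has_vector_derivative f a) (at_right a)"
    using assms(2) by (simp add: at_within_Icc_at_right)
  from tendsto_right_quotient_if_has_vector_derivative[OF this] show ?thesis
    by simp
qed

lemma linear_bound_if_bounded_on_ball:
  fixes T :: "'a::real_normed_vector \<Rightarrow> 'b::real_normed_vector"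
  assumes "linear T" and "e > 0" and bnd: "\<And>y. y \<in> ball x0 e \<Longrightarrow> norm (T y) \<le> N"
  shows "norm (T y) \<le> (4 * N / e) * norm y"
proof (cases "y = 0")
  case True
  then show ?thesis using linear_0[OF assms(1)] by simp
next
  case False
  define c where "c = e / 2 / norm y"
  have c: "c > 0" using False assms(2) by (simp add: c_def)
  have "x0 \<in> ball x0 e" "x0 + c *\<^sub>R y \<in> ball x0 e"
    using assms(2) c False by (auto simp: c_def dist_norm)
  then have "norm (T x0) \<le> N" "norm (T (x0 + c *\<^sub>R y)) \<le> N"
    using bnd by auto
  moreover have "T (x0 + c *\<^sub>R y) = T x0 + c *\<^sub>R T y"
    using assms(1) by (simp add: linear_add linear_scale)
  ultimately have "c * norm (T y) \<le> 2 * N"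
    using c norm_triangle_ineq4[of "T (x0 + c *\<^sub>R y)" "T x0"] by simp
  then have "norm (T y) \<le> 2 * N / c"
    using c by (simp add: field_simps)
  also have "2 * N / c = (4 * N / e) * norm y"
    using False assms(2) by (simp add: c_def field_simps)
  finally show ?thesis .
qed

lemma filterlim_at_left_to_0:
  "filterlim f F (at_left a) \<longleftrightarrow> filterlim (\<lambda>u. f (a - u)) F (at_right 0)"
  for a :: real
  unfolding at_left_minus[of a] filterlim_filtermap filterlim_at_right_to_0[of _ _ "- a"]
  by simp

locale strongly_continuous_semigroup =
  fixes S :: "real \<Rightarrow> 'a::banach \<Rightarrow> 'a"
  assumes bounded_linear: "t \<ge> 0 \<Longrightarrow> bounded_linear (S t)"
    and zero [simp]: "S 0 = id"
    and add: "0 \<le> s \<Longrightarrow> 0 \<le> t \<Longrightarrow> S (s + t) = S s \<circ> S t"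
    and tendsto_at_right_0: "((\<lambda>t. S t x) \<longlongrightarrow> x) (at_right 0)"
begin

lemma linear: "t \<ge> 0 \<Longrightarrow> linear (S t)"
  using bounded_linear bounded_linear.linear by blast

lemma orbit_bounded_near_0: "\<exists>n. \<forall>t\<in>{0..1 / real (Suc n)}. norm (S t x) \<le> real (Suc n)"
proof -
  obtain d where d: "d > 0" "\<And>t. 0 < t \<Longrightarrow> t < d \<Longrightarrow> dist (S t x) x < 1"
    using tendsto_at_right_0[of x, unfolded tendsto_iff, rule_format, of 1]
    by (auto simp: eventually_at_right_field)
  obtain n :: nat where n: "norm x + 1 \<le> n" "1 / d \<le> n"
    using real_arch_simple[of "max (norm x + 1) (1 / d)"] by auto
  have "1 / real (Suc n) < d"
    using n(2) d(1) by (simp add: field_simps)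
  moreover have "norm (S t x) \<le> real (Suc n)" if "0 < t" "t < d" for t
    using d(2)[OF that] n(1) norm_triangle_ineq2[of "S t x" x] by (simp add: dist_norm)
  ultimately have "norm (S t x) \<le> real (Suc n)" if "t \<in> {0..1 / real (Suc n)}" for t
    using that n(1) by (cases "t = 0") auto
  then show ?thesis by blast
qed

lemma exists_ball_uniformly_bounded_near_0:
  "\<exists>n x0 e. e > 0 \<and> (\<forall>t\<in>{0..1 / real (Suc n)}. \<forall>y\<in>ball x0 e. norm (S t y) \<le> real (Suc n))"
proof -
  define E where "E n = {x. \<forall>t\<in>{0..1 / real (Suc n)}. norm (S t x) \<le> real (Suc n)}" for n
  have "closed (E n)" for n
  proof -
    have "closed {x. norm (S t x) \<le> real (Suc n)}" if "t \<ge> 0" for t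
      using linear_continuous_on[OF bounded_linear[OF that]]
      by (intro closed_Collect_le continuous_intros) auto
    then have "closed (\<Inter>t\<in>{0..1 / real (Suc n)}. {x. norm (S t x) \<le> real (Suc n)})"
      by (intro closed_INT) auto
    moreover have "E n = (\<Inter>t\<in>{0..1 / real (Suc n)}. {x. norm (S t x) \<le> real (Suc n)})"
      by (auto simp: E_def)
    ultimately show ?thesis
      by simp
  qed
  moreover have "\<Union>(range E) = UNIV"
    using orbit_bounded_near_0 by (auto simp: E_def)
  ultimately have "\<exists>n. interior (E n) \<noteq> {}"
    using Baire_category_alt[of euclidean "range E"]
    by (auto simp: completely_metrizable_space_euclidean interior_of_openin)
  then obtain n x0 e where "e > 0" "ball x0 e \<subseteq> E n"
    by (meson equals0I mem_interior)
  then show ?thesis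
    unfolding E_def by blast
qed

lemma uniformly_bounded_near_0: "\<exists>d>0. \<exists>M. \<forall>t\<in>{0..d}. \<forall>x. norm (S t x) \<le> M * norm x"
proof -
  obtain n x0 e where e: "e > 0"
    and bnd: "\<And>t y. t \<in> {0..1 / real (Suc n)} \<Longrightarrow> y \<in> ball x0 e \<Longrightarrow> norm (S t y) \<le> real (Suc n)"
    using exists_ball_uniformly_bounded_near_0 by blast
  have "norm (S t x) \<le> (4 * real (Suc n) / e) * norm x" if "t \<in> {0..1 / real (Suc n)}" for t x
    using that e bnd[OF that] by (intro linear_bound_if_bounded_on_ball[OF linear]) auto
  then show ?thesis
    by (intro exI[of _ "1 / real (Suc n)"] conjI exI[of _ "4 * real (Suc n) / e"]) auto
qed

lemma tendsto_at_right: "s \<ge> 0 \<Longrightarrow> ((\<lambda>t. S t x) \<longlongrightarrow> S s x) (at_right s)"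
proof -
  assume "s \<ge> 0"
  have "((\<lambda>u. S s (S u x)) \<longlongrightarrow> S s x) (at_right 0)"
    using bounded_linear.tendsto[OF bounded_linear[OF \<open>s \<ge> 0\<close>] tendsto_at_right_0] .
  moreover have "\<forall>\<^sub>F u in at_right 0. S s (S u x) = S (u + s) x"
    using eventually_at_right_less[of "0::real"]
    by eventually_elim (use \<open>s \<ge> 0\<close> add[of s] in \<open>simp add: add.commute\<close>)
  ultimately show ?thesis
    unfolding filterlim_at_right_to_0[of _ _ s] using tendsto_cong by fastforce
qed

lemma tendsto_at_left: "s > 0 \<Longrightarrow> ((\<lambda>t. S t x) \<longlongrightarrow> S s x) (at_left s)"
proof -
  assume "s > 0"
  obtain \<delta> M where "\<delta> > 0" and M: "\<And>t y. t \<in> {0..\<delta>} \<Longrightarrow> norm (S t y) \<le> M * norm y"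
    using uniformly_bounded_near_0 by blast
  define d where "d = min \<delta> s"
  have d: "0 < d" "d \<le> \<delta>" "d \<le> s"
    using \<open>\<delta> > 0\<close> \<open>s > 0\<close> by (auto simp: d_def)
  obtain K where "K \<ge> 0" and K: "\<And>y. norm (S (s - d) y) \<le> norm y * K"
    using bounded_linear.nonneg_bounded[OF bounded_linear[of "s - d"]] d by auto
  \<comment> \<open>Only small times are controlled by M, so S (s - u) is split as S (s - d) \<circ> S (d - u).\<close>
  have "\<forall>\<^sub>F u in at_right 0. norm (S (s - u) x - S s x) \<le> K * M * norm (x - S u x)"
    using eventually_at_right_real[OF d(1)]
  proof eventually_elim
    case (elim u)
    then have u: "0 < u" "u < d" by auto
    have "S (s - u) = S (s - d) \<circ> S (d - u)" "S s = S (s - d) \<circ> (S (d - u) \<circ> S u)"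
      using add[of "s - d" "d - u"] add[of "s - d" d] add[of "d - u" u] u d by auto
    then have "S (s - u) x - S s x = S (s - d) (S (d - u) (x - S u x))"
      using linear_diff[OF linear[of "s - d"]] linear_diff[OF linear[of "d - u"]] u d by simp
    also have "norm \<dots> \<le> norm (S (d - u) (x - S u x)) * K"
      by (rule K)
    also have "\<dots> \<le> M * norm (x - S u x) * K"
      using M[of "d - u" "x - S u x"] u d \<open>K \<ge> 0\<close> by (intro mult_right_mono) auto
    finally show ?case
      by (simp add: ac_simps)
  qed
  moreover have "((\<lambda>u. K * M * norm (x - S u x)) \<longlongrightarrow> 0) (at_right 0)"
    using tendsto_mult_left[OF tendsto_norm[OF tendsto_diff[OF tendsto_const tendsto_at_right_0]], of "K * M" x x]
    by simp
  ultimately have "((\<lambda>u. S (s - u) x - S s x) \<longlongrightarrow> 0) (at_right 0)"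
    by (rule Lim_null_comparison)
  then show ?thesis
    unfolding filterlim_at_left_to_0 by (simp add: Lim_null[symmetric])
qed

lemma continuous_on_orbit: "continuous_on {0..} (\<lambda>t. S t x)"
  unfolding continuous_on_def
proof
  fix s :: real
  assume "s \<in> {0..}"
  show "((\<lambda>t. S t x) \<longlongrightarrow> S s x) (at s within {0..})"
  proof (cases "s = 0")
    case True
    then show ?thesis
      using tendsto_at_right[of 0] by (simp add: at_within_Ici_at_right)
  next
    case False
    with \<open>s \<in> {0..}\<close> have "((\<lambda>t. S t x) \<longlongrightarrow> S s x) (at s)"
      by (intro filterlim_split_at tendsto_at_left tendsto_at_right) auto
    then show ?thesis
      by (rule tendsto_within_subset) simp
  qed
qed

lemma integral_orbit_in_generator_graph:
  assumes "t \<ge> 0"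
  shows "(integral {0..t} (\<lambda>s. S s x), S t x - x) \<in> generator_graph S"
proof -
  define f where "f = (\<lambda>s. S s x)"
  have cont: "continuous_on {a..b} f" if "a \<ge> 0" for a b
    using continuous_on_subset[OF continuous_on_orbit] that by (auto simp: f_def)
  have int: "f integrable_on {a..b}" if "a \<ge> 0" for a b
    using cont[OF that] by (rule integrable_continuous_real)
  have increment: "S r (integral {0..t} f) - integral {0..t} f = integral {t..t + r} f - integral {0..r} f"
    if "r > 0" for r
  proof -
    have "S r (integral {0..t} f) = integral {0..t} (\<lambda>s. S r (f s))"
      using integral_linear[OF int bounded_linear[of r]] that by (simp add: o_def)
    also have "\<dots> = integral {0..t} (\<lambda>s. f (s + r))"
      using add[of r] that by (intro integral_cong) (simp add: f_def add.commute)
    also have "\<dots> = integral {r..t + r} f"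
      using integral_shift_real_ivl[where a = r and b = "t + r" and c = r and f = f] by simp
    finally have "S r (integral {0..t} f) = integral {r..t + r} f" .
    moreover have "integral {0..r} f + integral {r..t + r} f = integral {0..t} f + integral {t..t + r} f"
      using Henstock_Kurzweil_Integration.integral_combine[of 0 r "t + r" f]
        Henstock_Kurzweil_Integration.integral_combine[of 0 t "t + r" f] int that assms
      by simp
    ultimately show ?thesis
      by (simp add: algebra_simps)
  qed
  have quotients_eq: "\<forall>\<^sub>F r in at_right 0. (1 / r) *\<^sub>R integral {t..t + r} f - (1 / r) *\<^sub>R integral {0..0 + r} f
      = (1 / r) *\<^sub>R (S r (integral {0..t} f) - integral {0..t} f)"
    using eventually_at_right_less[of "0::real"]
    by eventually_elim (simp add: increment scaleR_diff_right)
  have "((\<lambda>r. (1 / r) *\<^sub>R integral {t..t + r} f - (1 / r) *\<^sub>R integral {0..0 + r} f)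
      \<longlongrightarrow> f t - f 0) (at_right 0)"
    using assms by (intro tendsto_diff tendsto_integral_average_at_right[where b = "t + 1"]
        tendsto_integral_average_at_right[where b = 1] cont) auto
  then have "((\<lambda>r. (1 / r) *\<^sub>R (S r (integral {0..t} f) - integral {0..t} f)) \<longlongrightarrow> f t - f 0)
      (at_right 0)"
    by (rule tendsto_cong[OF quotients_eq, THEN iffD1])
  then show ?thesis
    unfolding generator_graph_def by (simp add: f_def)
qed

lemma orbit_increment_in_generator_range: "t \<ge> 0 \<Longrightarrow> S t x - x \<in> Range (generator_graph S)"
  using integral_orbit_in_generator_graph by blast

end

lemma generator_graph_projection_sum:
  assumes "\<And>x. P x + Q x = x"
  shows "generator_graph (\<lambda>t x. P x + S t (Q x)) = {(x, y). (Q x, y) \<in> generator_graph S}"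
proof -
  have increment: "P x + S h (Q x) - x = S h (Q x) - Q x" for h x
    using assms[of x] by (metis add_diff_cancel_left)
  show ?thesis
    unfolding generator_graph_def increment by simp
qed

locale complex_hilbert =
  fixes sm :: "complex \<Rightarrow> 'a::banach \<Rightarrow> 'a" and ip :: "'a \<Rightarrow> 'a \<Rightarrow> complex"
  assumes complex_hilbert_space: "complex_hilbert_space sm ip"
begin

lemma sm_of_real: "sm (complex_of_real r) x = r *\<^sub>R x"
  and sm_mult: "sm (a * b) x = sm a (sm b x)"
  and sm_add_left: "sm (a + b) x = sm a x + sm b x"
  and sm_add_right: "sm a (x + y) = sm a x + sm a y"
  and ip_add_left: "ip (x + y) w = ip x w + ip y w"
  and ip_sm_left: "ip (sm a x) w = a * ip x w"
  and ip_commute: "ip y x = cnj (ip x y)"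
  and ip_self: "ip x x = complex_of_real ((norm x)\<^sup>2)"
  using complex_hilbert_space unfolding complex_hilbert_space_def by blast+

lemma sm_diff_right: "sm a (x - y) = sm a x - sm a y"
  using sm_add_right[of a "x - y" y] by (simp add: eq_diff_eq)

lemma sm_zero_left [simp]: "sm 0 x = 0"
  using sm_of_real[of 0 x] by simp

lemma ip_diff_left: "ip (x - y) w = ip x w - ip y w"
  using ip_add_left[of "x - y" y w] by (simp add: eq_diff_eq)

lemma ip_zero_left [simp]: "ip 0 w = 0"
  using ip_diff_left[of 0 0 w] by simp

lemma ip_zero_right [simp]: "ip w 0 = 0"
  using ip_commute[of 0 w] by simp

lemma ip_add_right: "ip w (x + y) = ip w x + ip w y"
  using ip_add_left[of x y w] ip_commute[of w] by (metis complex_cnj_add)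

lemma ip_sm_right: "ip w (sm a x) = cnj a * ip w x"
  using ip_sm_left[of a x w] ip_commute[of w] by (metis complex_cnj_mult)

lemma ip_self_eq_0_iff: "ip x x = 0 \<longleftrightarrow> x = 0"
  by (simp add: ip_self)

lemma ip_scaleR_left: "ip (r *\<^sub>R x) w = r *\<^sub>R ip x w"
  using ip_sm_left[of "complex_of_real r" x w] by (simp add: sm_of_real scaleR_conv_of_real)

lemma cauchy_schwarz: "cmod (ip x z) \<le> norm x * norm z"
proof (cases "z = 0")
  case True
  then show ?thesis by simp
next
  case False
  define c where "c = ip x z / ip z z"
  define w where "w = x - sm c z"
  have "ip z z \<noteq> 0"
    using False ip_self_eq_0_iff by blast
  then have "ip w z = 0"
    by (simp add: w_def c_def ip_diff_left ip_sm_left)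
  then have "ip z w = 0"
    using ip_commute[of w z] by simp
  have "x = w + sm c z"
    by (simp add: w_def)
  then have "ip x x = ip w w + (c * cnj c) * ip z z"
    using \<open>ip w z = 0\<close> \<open>ip z w = 0\<close>
    by (simp add: ip_add_left ip_add_right ip_sm_left ip_sm_right algebra_simps)
  then have pythagoras: "(norm x)\<^sup>2 = (norm w)\<^sup>2 + (cmod c)\<^sup>2 * (norm z)\<^sup>2"
    unfolding ip_self complex_norm_square[symmetric] by (metis of_real_add of_real_mult of_real_eq_iff)
  have "cmod c * (norm z)\<^sup>2 = cmod (ip x z)"
    using False by (simp add: c_def norm_divide norm_power ip_self)
  then have "(cmod (ip x z))\<^sup>2 = ((cmod c)\<^sup>2 * (norm z)\<^sup>2) * (norm z)\<^sup>2"
    by (auto simp: power2_eq_square ac_simps)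
  also have "\<dots> \<le> (norm x)\<^sup>2 * (norm z)\<^sup>2"
    using pythagoras by (intro mult_right_mono) auto
  finally have "(cmod (ip x z))\<^sup>2 \<le> (norm x * norm z)\<^sup>2"
    by (simp add: power_mult_distrib)
  then show ?thesis
    by (rule power2_le_imp_le) simp
qed

lemma bounded_clinear_op_iff:
  "bounded_clinear_op sm T \<longleftrightarrow> bounded_linear T \<and> (\<forall>a x. T (sm a x) = sm a (T x))"
proof
  assume T: "bounded_clinear_op sm T"
  then obtain K where "\<And>x. norm (T x) \<le> norm x * K"
    unfolding bounded_clinear_op_def by blast
  with T show "bounded_linear T \<and> (\<forall>a x. T (sm a x) = sm a (T x))"
    unfolding bounded_clinear_op_def
    by (metis bounded_linear_intro sm_of_real)
next
  assume "bounded_linear T \<and> (\<forall>a x. T (sm a x) = sm a (T x))"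
  then show "bounded_clinear_op sm T"
    unfolding bounded_clinear_op_def
    by (metis bounded_linear.bounded linear_add bounded_linear.linear)
qed

lemma strongly_continuous_semigroup_if_C0_semigroup:
  "C0_semigroup sm S \<Longrightarrow> strongly_continuous_semigroup S"
  unfolding C0_semigroup_def strongly_continuous_semigroup_def bounded_clinear_op_iff by blast

lemma bounded_linear_ip_left: "bounded_linear (\<lambda>x. ip x z)"
  by (rule bounded_linear_intro[where K = "norm z"])
    (auto simp: ip_add_left ip_scaleR_left cauchy_schwarz)

lemma closed_orthogonal: "closed {x. ip x z = 0}"
  using continuous_closed_vimage[OF closed_singleton[of 0],
      OF linear_continuous_at[OF bounded_linear_ip_left[of z]]]
  by (simp add: vimage_def)

lemma bounded_linear_projP: "bounded_linear (projP sm ip z)"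
proof -
  have "linear (\<lambda>c. sm c z)"
    by (rule linearI) (simp_all add: sm_add_left scaleR_conv_of_real sm_mult sm_of_real)
  then have "bounded_linear (\<lambda>c. sm c z)"
    by (simp add: linear_conv_bounded_linear)
  moreover have "bounded_linear (\<lambda>x. ip x z / ip z z)"
    using bounded_linear_compose[OF bounded_linear_divide bounded_linear_ip_left] .
  ultimately show ?thesis
    unfolding projP_def by (rule bounded_linear_compose)
qed

lemma projP_sm: "projP sm ip z (sm a x) = sm a (projP sm ip z x)"
  by (simp add: projP_def ip_sm_left sm_mult[symmetric])

lemma projQ_sm: "projQ sm ip z (sm a x) = sm a (projQ sm ip z x)"
  by (simp add: projQ_def projP_sm sm_diff_right)

lemma projP_eq_0_if_orthogonal: "ip x z = 0 \<Longrightarrow> projP sm ip z x = 0"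
  by (simp add: projP_def)

lemma projP_idem: "z \<noteq> 0 \<Longrightarrow> projP sm ip z (projP sm ip z x) = projP sm ip z x"
  by (simp add: projP_def ip_sm_left ip_self_eq_0_iff)

lemma projQ_orthogonal: "z \<noteq> 0 \<Longrightarrow> ip (projQ sm ip z x) z = 0"
  by (simp add: projQ_def projP_def ip_diff_left ip_sm_left ip_self_eq_0_iff)

lemma C0_semigroup_projection_sum:
  assumes S: "C0_semigroup sm S" and "z \<noteq> 0"
    and orth: "\<And>t x. t \<ge> 0 \<Longrightarrow> ip (S t x - x) z = 0"
  shows "C0_semigroup sm (\<lambda>t x. projP sm ip z x + S t (projQ sm ip z x))"
proof -
  let ?P = "projP sm ip z" and ?Q = "projQ sm ip z"
  interpret S: strongly_continuous_semigroup S
    using S by (rule strongly_continuous_semigroup_if_C0_semigroup)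
  have S_sm: "t \<ge> 0 \<Longrightarrow> S t (sm a x) = sm a (S t x)" for t a x
    using S unfolding C0_semigroup_def bounded_clinear_op_iff by blast
  have P_S_Q_eq_0: "?P (S t (?Q x)) = 0" if "t \<ge> 0" for t x
  proof (rule projP_eq_0_if_orthogonal)
    show "ip (S t (?Q x)) z = 0"
      using orth[OF that, of "?Q x"] projQ_orthogonal[OF \<open>z \<noteq> 0\<close>, of x]
      by (simp add: ip_diff_left)
  qed
  have "bounded_clinear_op sm (\<lambda>x. ?P x + S t (?Q x))" if "t \<ge> 0" for t
  proof -
    have "bounded_linear ?Q"
      unfolding projQ_def by (intro bounded_linear_sub bounded_linear_ident bounded_linear_projP)
    then have "bounded_linear (\<lambda>x. ?P x + S t (?Q x))"
      using bounded_linear_compose[OF S.bounded_linear[OF that]]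
      by (intro bounded_linear_add bounded_linear_projP) auto
    then show ?thesis
      using that by (simp add: bounded_clinear_op_iff projP_sm projQ_sm S_sm sm_add_right)
  qed
  moreover have "(\<lambda>x. ?P x + S (s + t) (?Q x)) = (\<lambda>x. ?P x + S s (?Q x)) \<circ> (\<lambda>x. ?P x + S t (?Q x))"
    if "s \<ge> 0" "t \<ge> 0" for s t
  proof
    fix x
    have "?P (?P x + S t (?Q x)) = ?P x"
      using linear_add[OF bounded_linear.linear[OF bounded_linear_projP]]
        projP_idem[OF \<open>z \<noteq> 0\<close>] P_S_Q_eq_0[OF that(2)] by simp
    then have "?Q (?P x + S t (?Q x)) = S t (?Q x)"
      by (simp add: projQ_def)
    with \<open>?P (?P x + S t (?Q x)) = ?P x\<close> show "?P x + S (s + t) (?Q x) =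
        ((\<lambda>x. ?P x + S s (?Q x)) \<circ> (\<lambda>x. ?P x + S t (?Q x))) x"
      using S.add[OF that] by simp
  qed
  moreover have "(\<lambda>x. ?P x + S 0 (?Q x)) = id"
    by (simp add: projQ_def fun_eq_iff)
  moreover have "((\<lambda>t. ?P x + S t (?Q x)) \<longlongrightarrow> x) (at_right 0)" for x
    using tendsto_add[OF tendsto_const S.tendsto_at_right_0, of "?P x" "?Q x"]
    by (simp add: projQ_def)
  ultimately show ?thesis
    unfolding C0_semigroup_def by blast
qed

end

theorem lemma2:
  fixes sm :: "complex \<Rightarrow> 'a::banach \<Rightarrow> 'a"
    and ip :: "'a \<Rightarrow> 'a \<Rightarrow> complex"
    and U S :: "real \<Rightarrow> 'a \<Rightarrow> 'a"
    and z :: 'a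
  assumes H: "complex_hilbert_space sm ip"
    and U: "C0_semigroup sm U"
    and z_adj: "z \<in> adjoint_dom ip (generator_graph U)"
    and z_ne: "z \<noteq> 0"
    and S: "C0_semigroup sm S"
    and S_gen: "generator_graph S = closure (QL_graph sm ip z (generator_graph U))"
  shows "C0_semigroup sm (\<lambda>t x. projP sm ip z x + S t (projQ sm ip z x))
    \<and> generator_graph (\<lambda>t x. projP sm ip z x + S t (projQ sm ip z x))
        = {(x, y). (projQ sm ip z x, y) \<in> closure (QL_graph sm ip z (generator_graph U))}"
proof -
  interpret complex_hilbert sm ip
    using H by unfold_locales
  interpret S: strongly_continuous_semigroup S
    using S by (rule strongly_continuous_semigroup_if_C0_semigroup)
  have "QL_graph sm ip z (generator_graph U) \<subseteq> UNIV \<times> {y. ip y z = 0}"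
    using projQ_orthogonal[OF z_ne] by (auto simp: QL_graph_def)
  then have "closure (QL_graph sm ip z (generator_graph U)) \<subseteq> UNIV \<times> {y. ip y z = 0}"
    by (intro closure_minimal closed_Times closed_orthogonal) auto
  then have "Range (generator_graph S) \<subseteq> {y. ip y z = 0}"
    using S_gen by auto
  then have "ip (S t x - x) z = 0" if "t \<ge> 0" for t x
    using S.orbit_increment_in_generator_range[OF that] by blast
  then show ?thesis
    using C0_semigroup_projection_sum[OF S z_ne] S_gen
      generator_graph_projection_sum[of "projP sm ip z" "projQ sm ip z" S]
    by (simp add: projQ_def)
qed

end
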